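(* Let $(\mathcal{F}_t)$ be a filtration. Let $\varepsilon_t = \sigma_t z_t$ with $\sigma_t = \exp(H_t)$, $H_t = \bar{H}_t + h_t$, where $\bar{H}_t = E\{H_t\mid\mathcal{F}_{t-1}\}$ is $\mathcal{F}_{t-1}$-measurable, $(h_t)$ is i.i.d. with Laplace density $\frac{1}{2\Delta}\exp(-|x|/\Delta)$, $\Delta = E|h_t|>0$, and $(z_t)$ is i.i.d. $\mathcal{N}(0,1)$, with $z_t$, $h_t$ mutually independent and independent of $\mathcal{F}_{t-1}$. Then, conditionally on $\mathcal{F}_{t-1}$, $\varepsilon_t$ has probability density $$p_\varepsilon(\varepsilon_t\mid\mathcal{F}_{t-1}) = \frac{1}{4\sqrt{\pi}\Delta}\left(\sqrt{2}e^{\bar{H}_t}\right)^{-1/\Delta}\Gamma\!\left(\frac{1-1/\Delta}{2}, \frac{\varepsilon_t^2}{2e^{2\bar{H}_t}}\right)|\varepsilon_t|^{1/\Delta - 1} + \frac{1}{4\sqrt{\pi}\Delta}\left(\sqrt{2}e^{\bar{H}_t}\right)^{1/\Delta}\gamma\!\left(\frac{1+1/\Delta}{2}, \frac{\varepsilon_t^2}{2e^{2\bar{H}_t}}\right)|\varepsilon_t|^{-1/\Delta - 1}.$$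
   Context: $\Gamma(a,b) = \int_b^\infty x^{a-1}e^{-x}\,dx$ is the upper incomplete gamma function and $\gamma(a,b) = \int_0^b x^{a-1}e^{-x}\,dx$ is the lower incomplete gamma function. *)

theory Defs
  imports "HOL-Probability.Probability"
begin

definition upper_inc_gamma :: "real \<Rightarrow> real \<Rightarrow> real" where
  "upper_inc_gamma a b = (\<integral>x\<in>{b<..}. x powr (a - 1) * exp (- x) \<partial>lborel)"

definition lower_inc_gamma :: "real \<Rightarrow> real \<Rightarrow> real" where
  "lower_inc_gamma a b = (\<integral>x\<in>{0<..<b}. x powr (a - 1) * exp (- x) \<partial>lborel)"

definition laplace_density :: "real \<Rightarrow> real \<Rightarrow> real" where
  "laplace_density \<Delta> x = exp (- \<bar>x\<bar> / \<Delta>) / (2 * \<Delta>)"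

text \<open>The claimed conditional density of eps_t, given the value c of Hbar_t, at the point x.\<close>
definition eps_density :: "real \<Rightarrow> real \<Rightarrow> real \<Rightarrow> real" where
  "eps_density \<Delta> c x =
     1 / (4 * sqrt pi * \<Delta>) * (sqrt 2 * exp c) powr (- 1 / \<Delta>)
       * upper_inc_gamma ((1 - 1 / \<Delta>) / 2) (x\<^sup>2 / (2 * exp (2 * c))) * \<bar>x\<bar> powr (1 / \<Delta> - 1)
   + 1 / (4 * sqrt pi * \<Delta>) * (sqrt 2 * exp c) powr (1 / \<Delta>)
       * lower_inc_gamma ((1 + 1 / \<Delta>) / 2) (x\<^sup>2 / (2 * exp (2 * c))) * \<bar>x\<bar> powr (- 1 / \<Delta> - 1)"

definition rv_events :: "'a measure \<Rightarrow> ('a \<Rightarrow> real) \<Rightarrow> 'a set set" where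
  "rv_events M X = {X -` A \<inter> space M | A. A \<in> sets borel}"

end

theory Submission
  imports Defs
begin

text \<open>Conditionally on \<open>F (t - 1)\<close> the value \<open>c = Hbar t\<close> is frozen, while \<open>(h t, z t)\<close> is
  independent of \<open>F (t - 1)\<close> with product density. Hence \<open>exp (c + h) * z\<close> is a Laplace scale
  mixture of normals, with density \<open>\<integral> p\<^sub>h u * \<phi> (x / exp (c + u)) / exp (c + u) du\<close>.
  Splitting this integral at \<open>u = 0\<close> and substituting \<open>y = x\<^sup>2 / (2 * exp (2 * (c + u)))\<close> turns
  the half-line \<open>u < 0\<close> into an upper and the half-line \<open>u > 0\<close> into a lower incomplete gamma
  integral.\<close>

lemma absolutely_integrable_on_if_set_integrable_lborel:
  fixes f :: "real \<Rightarrow> real"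
  assumes "set_integrable lborel S f"
  shows "f absolutely_integrable_on S"
  using assms unfolding set_integrable_def
  by (subst integrable_completion) (auto dest: borel_measurable_integrable)

lemma set_integrable_Gamma_integrand:
  fixes a :: real
  assumes "a > 0"
  shows "set_integrable lborel {0<..} (\<lambda>y. y powr (a - 1) * exp (- y))"
proof -
  have "((\<lambda>y. y powr (a - 1) / exp y) has_integral Gamma a) {0..}"
    by (rule Gamma_integral_real[OF assms])
  then have "(\<lambda>y. y powr (a - 1) / exp y) absolutely_integrable_on {0..}"
    by (intro nonnegative_absolutely_integrable_1) (auto simp: integrable_on_def)
  then have "set_integrable lborel {0..} (\<lambda>y. y powr (a - 1) / exp y)"
    unfolding set_integrable_def by (subst (asm) integrable_completion) auto
  then have "set_integrable lborel {0<..} (\<lambda>y. y powr (a - 1) / exp y)"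
    by (rule set_integrable_subset) auto
  then show ?thesis
    by (simp add: exp_minus field_simps)
qed

lemma set_integrable_upper_Gamma_integrand:
  fixes a b :: real
  assumes b: "b > 0"
  shows "set_integrable lborel {b<..} (\<lambda>y. y powr (a - 1) * exp (- y))"
proof (rule set_integrable_bound)
  define d where "d = \<bar>a\<bar> + 1"
  have "a + d > 0" "d \<ge> 0"
    unfolding d_def by linarith+
  show "set_integrable lborel {b<..} (\<lambda>y. b powr (- d) * (y powr ((a + d) - 1) * exp (- y)))"
    by (intro set_integrable_mult_right set_integrable_subset[OF set_integrable_Gamma_integrand])
       (use \<open>a + d > 0\<close> b in auto)
  show "set_borel_measurable lborel {b<..} (\<lambda>y. y powr (a - 1) * exp (- y))"
    unfolding set_borel_measurable_def by measurable
  show "AE y in lborel. y \<in> {b<..} \<longrightarrow>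
      norm (y powr (a - 1) * exp (- y)) \<le> norm (b powr (- d) * (y powr ((a + d) - 1) * exp (- y)))"
  proof (intro AE_I2 impI)
    fix y assume y: "y \<in> {b<..}"
    have "y powr (a - 1) = y powr (- d) * y powr ((a + d) - 1)"
      by (simp add: powr_add[symmetric])
    also have "\<dots> \<le> b powr (- d) * y powr ((a + d) - 1)"
      by (intro mult_right_mono powr_mono2') (use y b \<open>d \<ge> 0\<close> in auto)
    finally show "norm (y powr (a - 1) * exp (- y)) \<le> norm (b powr (- d) * (y powr ((a + d) - 1) * exp (- y)))"
      using y b by (simp add: abs_mult)
  qed
qed

lemma has_integral_exp_substitution:
  fixes f :: "real \<Rightarrow> real" and b :: real and S :: "real set"
  assumes b: "b > 0" and S: "S \<in> sets lborel"
    and f: "set_integrable lborel ((\<lambda>u. b * exp (- 2 * u)) ` S) f"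
  shows "((\<lambda>u. 2 * b * exp (- 2 * u) * f (b * exp (- 2 * u)))
           has_integral (\<integral>y\<in>(\<lambda>u. b * exp (- 2 * u)) ` S. f y \<partial>lborel)) S"
proof -
  let ?g = "\<lambda>u. b * exp (- 2 * u)"
  have S': "S \<in> sets lebesgue"
    using S by simp
  have derivative: "(?g has_field_derivative - 2 * b * exp (- 2 * u)) (at u within S)" for u
    by (auto intro!: derivative_eq_intros)
  have "inj_on ?g S"
    using b by (auto simp: inj_on_def)
  note change_of_variables = has_absolute_integral_change_of_variables_1'[OF S' derivative this,
      of f "integral (?g ` S) f", THEN iffD2]
  have abs_derivative: "\<bar>- 2 * b * exp (- 2 * u)\<bar> = 2 * b * exp (- 2 * u)" for u
    using b by simp
  have "(\<lambda>u. 2 * b * exp (- 2 * u) * f (?g u)) absolutely_integrable_on S"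
    and "integral S (\<lambda>u. 2 * b * exp (- 2 * u) * f (?g u)) = integral (?g ` S) f"
    using change_of_variables[OF conjI[OF absolutely_integrable_on_if_set_integrable_lborel[OF f] refl]]
    unfolding abs_derivative by auto
  then show ?thesis
    unfolding has_integral_iff set_borel_integral_eq_integral(2)[OF f]
    using set_lebesgue_integral_eq_integral(1) by blast
qed

lemma image_exp_substitution:
  fixes b :: real
  assumes b: "b > 0"
  shows "(\<lambda>u. b * exp (- 2 * u)) ` {0<..} = {0<..<b}"
    and "(\<lambda>u. b * exp (- 2 * u)) ` {..<0} = {b<..}"
proof -
  have inverse: "y = b * exp (- 2 * (- ln (y / b) / 2))" if "y > 0" for y
    using that b by simp
  show "(\<lambda>u. b * exp (- 2 * u)) ` {0<..} = {0<..<b}"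
  proof (intro equalityI subsetI)
    fix y assume "y \<in> {0<..<b}"
    then show "y \<in> (\<lambda>u. b * exp (- 2 * u)) ` {0<..}"
      using inverse[of y] b by (intro image_eqI[of _ _ "- ln (y / b) / 2"]) (auto simp: ln_div)
  qed (use b in \<open>auto simp: mult_less_cancel_left1\<close>)
  show "(\<lambda>u. b * exp (- 2 * u)) ` {..<0} = {b<..}"
  proof (intro equalityI subsetI)
    fix y assume "y \<in> {b<..}"
    then show "y \<in> (\<lambda>u. b * exp (- 2 * u)) ` {..<0}"
      using inverse[of y] b by (intro image_eqI[of _ _ "- ln (y / b) / 2"]) (auto simp: ln_div)
  qed (use b in auto)
qed

text \<open>The joint density of \<open>(h t, \<epsilon> t)\<close> given \<open>Hbar t = c\<close>; integrating out \<open>u\<close> gives \<open>eps_density\<close>.\<close>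
definition eps_joint_density :: "real \<Rightarrow> real \<Rightarrow> real \<Rightarrow> real \<Rightarrow> real" where
  "eps_joint_density \<Delta> c u x = laplace_density \<Delta> u * std_normal_density (x / exp (c + u)) / exp (c + u)"

lemma borel_measurable_laplace_density [measurable]: "laplace_density \<Delta> \<in> borel_measurable borel"
  unfolding laplace_density_def by measurable

lemma borel_measurable_eps_joint_density [measurable]:
  "(\<lambda>(u, x). eps_joint_density \<Delta> c u x) \<in> borel_measurable (lborel \<Otimes>\<^sub>M lborel)"
  unfolding eps_joint_density_def by measurable

lemma laplace_density_nonneg: "\<Delta> > 0 \<Longrightarrow> laplace_density \<Delta> u \<ge> 0"
  by (simp add: laplace_density_def)

lemma eps_joint_density_nonneg: "\<Delta> > 0 \<Longrightarrow> eps_joint_density \<Delta> c u x \<ge> 0"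
  by (simp add: eps_joint_density_def laplace_density_nonneg)

lemma eps_joint_density_eq_Gamma_integrand:
  fixes \<Delta> c x u s :: real
  assumes \<Delta>: "\<Delta> > 0" and x: "x \<noteq> 0" and s: "\<bar>u\<bar> = s * u"
  defines "b \<equiv> x\<^sup>2 / (2 * exp (2 * c))" and "a \<equiv> (1 + s / \<Delta>) / 2"
  shows "eps_joint_density \<Delta> c u x
       = exp (- c) / (4 * \<Delta> * sqrt (2 * pi) * b powr a) *
         (2 * b * exp (- 2 * u) * ((b * exp (- 2 * u)) powr (a - 1) * exp (- (b * exp (- 2 * u)))))"
proof -
  have b: "b > 0"
    using x unfolding b_def by simp
  have "(x / exp (c + u))\<^sup>2 / 2 = b * exp (- 2 * u)"
    unfolding b_def
    by (simp add: power_divide field_simps exp_add[symmetric] power2_eq_square exp_minus)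
  then have normal: "std_normal_density (x / exp (c + u)) = exp (- (b * exp (- 2 * u))) / sqrt (2 * pi)"
    by (simp add: std_normal_density_def normal_density_def)
  have powr_eq: "(b * exp (- 2 * u)) powr (a - 1) = b powr a / b * exp (- 2 * u * (a - 1))"
  proof -
    have "exp (- 2 * u * (a - 1)) = exp (- (2 * u * a)) / exp (- (2 * u))"
      by (simp add: exp_diff[symmetric] algebra_simps)
    then show ?thesis
      using b by (simp add: powr_mult exp_powr_real powr_diff)
  qed
  have "eps_joint_density \<Delta> c u x
      = exp (- (s * u) / \<Delta> - b * exp (- 2 * u) - c - u) / (2 * \<Delta> * sqrt (2 * pi))"
  proof -
    have "exp (- (s * u) / \<Delta> - b * exp (- 2 * u) - c - u)
        = exp (- (s * u) / \<Delta>) * exp (- (b * exp (- 2 * u))) / exp (c + u)"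
      by (simp add: exp_add[symmetric] exp_diff[symmetric] algebra_simps)
    then show ?thesis
      unfolding eps_joint_density_def laplace_density_def normal s by simp
  qed
  also have "\<dots> = exp (- c) * exp (- 2 * u) * exp (- 2 * u * (a - 1)) * exp (- (b * exp (- 2 * u)))
      / (2 * \<Delta> * sqrt (2 * pi))"
  proof -
    have "- (s * u) / \<Delta> - b * exp (- 2 * u) - c - u
        = - c + - 2 * u + - 2 * u * (a - 1) + - (b * exp (- 2 * u))"
      unfolding a_def using \<Delta> by (simp add: field_simps)
    then show ?thesis
      by (simp add: exp_add[symmetric])
  qed
  finally show ?thesis
    unfolding powr_eq using b \<Delta> by (simp add: ac_simps)
qed

lemma Gamma_prefactor_eq:
  fixes \<Delta> c x t :: real
  assumes \<Delta>: "\<Delta> > 0" and x: "x \<noteq> 0"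
  shows "exp (- c) / (4 * \<Delta> * sqrt (2 * pi) * (x\<^sup>2 / (2 * exp (2 * c))) powr ((1 + t) / 2))
       = 1 / (4 * sqrt pi * \<Delta>) * (sqrt 2 * exp c) powr t * \<bar>x\<bar> powr (- t - 1)"
proof -
  define L where "L = ln \<bar>x\<bar>"
  have "ln (x\<^sup>2) = 2 * L"
    unfolding L_def using x by (subst power2_abs[symmetric], subst ln_realpow) auto
  then have b_powr: "(x\<^sup>2 / (2 * exp (2 * c))) powr ((1 + t) / 2) = exp ((1 + t) / 2 * (2 * L - ln 2 - 2 * c))"
    using x by (simp add: powr_def ln_div ln_mult)
  have sqrt2: "sqrt 2 = exp (ln 2 / 2)"
    by (simp add: powr_half_sqrt[symmetric] powr_def)
  have "exp (- c) / (sqrt 2 * exp ((1 + t) / 2 * (2 * L - ln 2 - 2 * c)))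
      = exp (- c - ln 2 / 2 - (1 + t) / 2 * (2 * L - ln 2 - 2 * c))"
    unfolding sqrt2 by (simp add: exp_diff exp_add[symmetric])
  also have "- c - ln 2 / 2 - (1 + t) / 2 * (2 * L - ln 2 - 2 * c) = t * (ln 2 / 2 + c) + (- t - 1) * L"
    by (simp add: field_simps)
  also have "exp \<dots> = (sqrt 2 * exp c) powr t * \<bar>x\<bar> powr (- t - 1)"
  proof -
    have "(sqrt 2 * exp c) powr t = exp (t * (ln 2 / 2 + c))"
      by (simp add: powr_def sqrt2 ln_mult)
    moreover have "\<bar>x\<bar> powr (- t - 1) = exp ((- t - 1) * L)"
      using x by (simp add: powr_def L_def)
    ultimately show ?thesis
      by (simp add: exp_add)
  qed
  finally show ?thesis
    unfolding b_powr real_sqrt_mult using \<Delta> by (simp add: field_simps)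
qed

lemma nn_integral_eps_joint_density_half_line:
  fixes \<Delta> c x s :: real and S :: "real set"
  assumes \<Delta>: "\<Delta> > 0" and x: "x \<noteq> 0" and S: "S \<in> sets lborel"
    and s: "\<And>u. u \<in> S \<Longrightarrow> \<bar>u\<bar> = s * u"
  defines "b \<equiv> x\<^sup>2 / (2 * exp (2 * c))" and "a \<equiv> (1 + s / \<Delta>) / 2"
  assumes int: "set_integrable lborel ((\<lambda>u. b * exp (- 2 * u)) ` S) (\<lambda>y. y powr (a - 1) * exp (- y))"
  shows "(\<integral>\<^sup>+u\<in>S. ennreal (eps_joint_density \<Delta> c u x) \<partial>lborel)
     = ennreal (exp (- c) / (4 * \<Delta> * sqrt (2 * pi) * b powr a) *
         (\<integral>y\<in>(\<lambda>u. b * exp (- 2 * u)) ` S. y powr (a - 1) * exp (- y) \<partial>lborel))"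
proof (rule nn_integral_has_integral_lebesgue')
  have b: "b > 0"
    using x unfolding b_def by simp
  show "0 \<le> eps_joint_density \<Delta> c u x" for u
    using \<Delta> by (rule eps_joint_density_nonneg)
  show "((\<lambda>u. eps_joint_density \<Delta> c u x) has_integral
      exp (- c) / (4 * \<Delta> * sqrt (2 * pi) * b powr a) *
      (\<integral>y\<in>(\<lambda>u. b * exp (- 2 * u)) ` S. y powr (a - 1) * exp (- y) \<partial>lborel)) S"
  proof (subst has_integral_cong)
    show "eps_joint_density \<Delta> c u x
        = exp (- c) / (4 * \<Delta> * sqrt (2 * pi) * b powr a) *
          (2 * b * exp (- 2 * u) * ((b * exp (- 2 * u)) powr (a - 1) * exp (- (b * exp (- 2 * u)))))"
      if "u \<in> S" for u
      unfolding a_def b_def by (rule eps_joint_density_eq_Gamma_integrand[OF \<Delta> x s[OF that]])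
  qed (intro has_integral_mult_right has_integral_exp_substitution b S int)
qed

lemma nn_integral_eps_joint_density:
  fixes \<Delta> c x :: real
  assumes \<Delta>: "\<Delta> > 0" and x: "x \<noteq> 0"
  shows "(\<integral>\<^sup>+u. ennreal (eps_joint_density \<Delta> c u x) \<partial>lborel) = ennreal (eps_density \<Delta> c x)"
proof -
  define f where "f u = eps_joint_density \<Delta> c u x" for u
  define b where "b = x\<^sup>2 / (2 * exp (2 * c))"
  define lower where "lower = 1 / (4 * sqrt pi * \<Delta>) * (sqrt 2 * exp c) powr (1 / \<Delta>)
      * lower_inc_gamma ((1 + 1 / \<Delta>) / 2) b * \<bar>x\<bar> powr (- 1 / \<Delta> - 1)"
  define upper where "upper = 1 / (4 * sqrt pi * \<Delta>) * (sqrt 2 * exp c) powr (- 1 / \<Delta>)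
      * upper_inc_gamma ((1 - 1 / \<Delta>) / 2) b * \<bar>x\<bar> powr (1 / \<Delta> - 1)"
  have b: "b > 0"
    using x unfolding b_def by simp
  have [measurable]: "f \<in> borel_measurable borel"
    unfolding f_def eps_joint_density_def by measurable
  have "(\<integral>\<^sup>+u\<in>{0<..}. ennreal (f u) \<partial>lborel) = ennreal lower"
  proof -
    have "(1 + 1 / \<Delta>) / 2 > 0"
      using \<Delta> by (simp add: add_pos_pos)
    then have "set_integrable lborel {0<..<b} (\<lambda>y. y powr ((1 + 1 / \<Delta>) / 2 - 1) * exp (- y))"
      by (intro set_integrable_subset[OF set_integrable_Gamma_integrand]) auto
    then show ?thesis
      using nn_integral_eps_joint_density_half_line[OF \<Delta> x, of "{0<..}" 1 c, folded b_def]
      unfolding f_def lower_def lower_inc_gamma_def image_exp_substitution(1)[OF b]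
        Gamma_prefactor_eq[OF \<Delta> x, of c "1 / \<Delta>", folded b_def]
      by (simp add: mult_ac)
  qed
  moreover have "(\<integral>\<^sup>+u\<in>{..<0}. ennreal (f u) \<partial>lborel) = ennreal upper"
    using nn_integral_eps_joint_density_half_line[OF \<Delta> x, of "{..<0}" "- 1" c, folded b_def]
      set_integrable_upper_Gamma_integrand[OF b, of "(1 - 1 / \<Delta>) / 2"]
    unfolding f_def upper_def upper_inc_gamma_def image_exp_substitution(2)[OF b]
      Gamma_prefactor_eq[OF \<Delta> x, of c "- 1 / \<Delta>", folded b_def]
    by (simp add: mult_ac)
  moreover have "(\<integral>\<^sup>+u. ennreal (f u) \<partial>lborel)
      = (\<integral>\<^sup>+u\<in>{0<..}. ennreal (f u) \<partial>lborel) + (\<integral>\<^sup>+u\<in>{..<0}. ennreal (f u) \<partial>lborel)"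
  proof -
    have "AE u in lborel. ennreal (f u) = ennreal (f u) * indicator {0<..} u + ennreal (f u) * indicator {..<0} u"
      using AE_lborel_singleton[of 0] by eventually_elim (auto simp: indicator_def)
    then show ?thesis
      by (subst nn_integral_add[symmetric]) (auto intro: nn_integral_cong_AE)
  qed
  moreover have "lower \<ge> 0" "upper \<ge> 0"
    unfolding lower_def upper_def lower_inc_gamma_def upper_inc_gamma_def set_lebesgue_integral_def
    using \<Delta> by (auto intro!: mult_nonneg_nonneg Bochner_Integration.integral_nonneg simp: indicator_def)
  moreover have "eps_density \<Delta> c x = upper + lower"
    unfolding eps_density_def upper_def lower_def b_def ..
  ultimately show ?thesis
    unfolding f_def by (simp only: ennreal_plus add.commute)
qed

lemma nn_integral_indicator_scaled:
  fixes f :: "real \<Rightarrow> real" and s :: real and B :: "real set"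
  assumes s: "s > 0" and [measurable]: "f \<in> borel_measurable borel" "B \<in> sets borel"
  shows "(\<integral>\<^sup>+w. ennreal (f w) * indicator B (s * w) \<partial>lborel) = (\<integral>\<^sup>+x\<in>B. ennreal (f (x / s) / s) \<partial>lborel)"
proof -
  have "(\<integral>\<^sup>+x\<in>B. ennreal (f (x / s) / s) \<partial>lborel)
      = ennreal s * (\<integral>\<^sup>+w. ennreal (f w / s) * indicator B (s * w) \<partial>lborel)"
    using nn_integral_real_affine[of "\<lambda>x. ennreal (f (x / s) / s) * indicator B x" s 0] s by simp
  also have "\<dots> = (\<integral>\<^sup>+w. ennreal (f w) * indicator B (s * w) \<partial>lborel)"
    using s by (subst nn_integral_cmult[symmetric]) (auto simp: ennreal_mult'[symmetric] mult.assoc[symmetric])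
  finally show ?thesis ..
qed

lemma nn_integral_laplace_normal_scale_mixture:
  fixes \<Delta> c :: real and B :: "real set"
  assumes \<Delta>: "\<Delta> > 0" and [measurable]: "B \<in> sets borel"
  shows "(\<integral>\<^sup>+(u, w). ennreal (laplace_density \<Delta> u) * ennreal (std_normal_density w) * indicator B (exp (c + u) * w)
            \<partial>(lborel \<Otimes>\<^sub>M lborel))
       = (\<integral>\<^sup>+x\<in>B. ennreal (eps_density \<Delta> c x) \<partial>lborel)"
proof -
  have inner: "(\<integral>\<^sup>+w. ennreal (laplace_density \<Delta> u) * ennreal (std_normal_density w) * indicator B (exp (c + u) * w) \<partial>lborel)
      = (\<integral>\<^sup>+x. ennreal (eps_joint_density \<Delta> c u x) * indicator B x \<partial>lborel)" for u
  proof -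
    have "(\<integral>\<^sup>+w. ennreal (laplace_density \<Delta> u) * ennreal (std_normal_density w) * indicator B (exp (c + u) * w) \<partial>lborel)
        = ennreal (laplace_density \<Delta> u) * (\<integral>\<^sup>+w. ennreal (std_normal_density w) * indicator B (exp (c + u) * w) \<partial>lborel)"
      by (subst nn_integral_cmult[symmetric]) (simp_all add: mult.assoc)
    also have "\<dots> = ennreal (laplace_density \<Delta> u) *
        (\<integral>\<^sup>+x. ennreal (std_normal_density (x / exp (c + u)) / exp (c + u)) * indicator B x \<partial>lborel)"
      by (simp add: nn_integral_indicator_scaled)
    also have "\<dots> = (\<integral>\<^sup>+x. ennreal (eps_joint_density \<Delta> c u x) * indicator B x \<partial>lborel)"
    proof (subst nn_integral_cmult[symmetric])
      show "(\<integral>\<^sup>+x. ennreal (laplace_density \<Delta> u) *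
            (ennreal (std_normal_density (x / exp (c + u)) / exp (c + u)) * indicator B x) \<partial>lborel)
          = (\<integral>\<^sup>+x. ennreal (eps_joint_density \<Delta> c u x) * indicator B x \<partial>lborel)"
        using laplace_density_nonneg[OF \<Delta>]
        by (simp add: eps_joint_density_def mult.assoc[symmetric] ennreal_mult'[symmetric])
    qed simp
    finally show ?thesis .
  qed
  have "(\<integral>\<^sup>+(u, w). ennreal (laplace_density \<Delta> u) * ennreal (std_normal_density w) * indicator B (exp (c + u) * w)
            \<partial>(lborel \<Otimes>\<^sub>M lborel))
      = (\<integral>\<^sup>+u. \<integral>\<^sup>+x. ennreal (eps_joint_density \<Delta> c u x) * indicator B x \<partial>lborel \<partial>lborel)"
    by (subst lborel.nn_integral_fst[symmetric]) (simp_all add: inner)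
  also have "\<dots> = (\<integral>\<^sup>+x. (\<integral>\<^sup>+u. ennreal (eps_joint_density \<Delta> c u x) \<partial>lborel) * indicator B x \<partial>lborel)"
    by (subst lborel_pair.Fubini') (simp_all add: nn_integral_multc)
  also have "\<dots> = (\<integral>\<^sup>+x\<in>B. ennreal (eps_density \<Delta> c x) \<partial>lborel)"
    using AE_lborel_singleton[of 0]
    by (intro nn_integral_cong_AE, eventually_elim) (simp add: nn_integral_eps_joint_density[OF \<Delta>])
  finally show ?thesis .
qed

lemma Int_stable_rv_events: "Int_stable (rv_events M X)"
  unfolding Int_stable_def rv_events_def
proof safe
  fix A B :: "real set" assume "A \<in> sets borel" "B \<in> sets borel"
  then show "\<exists>C. (X -` A \<inter> space M) \<inter> (X -` B \<inter> space M) = X -` C \<inter> space M \<and> C \<in> sets borel"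
    by (intro exI[of _ "A \<inter> B"]) auto
qed

lemma (in prob_space) indep_var_from_disjoint_blocks:
  assumes indep: "indep_sets E I" and stable: "\<And>i. i \<in> I \<Longrightarrow> Int_stable (E i)"
    and J: "J \<subseteq> I" and K: "K \<subseteq> I" and disjoint: "J \<inter> K = {}"
    and X: "random_variable S X" "\<And>A. A \<in> sets S \<Longrightarrow> X -` A \<inter> space M \<in> sigma_sets (space M) (\<Union>i\<in>J. E i)"
    and Y: "random_variable T Y" "\<And>A. A \<in> sets T \<Longrightarrow> Y -` A \<inter> space M \<in> sigma_sets (space M) (\<Union>i\<in>K. E i)"
  shows "indep_var S X T Y"
proof -
  have "indep_sets (\<lambda>b. sigma_sets (space M) (\<Union>i\<in>case_bool J K b. E i)) UNIV"
  proof (rule indep_sets_collect_sigma)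
    show "indep_sets E (\<Union>b\<in>UNIV. case_bool J K b)"
      by (rule indep_sets_mono_index[OF _ indep]) (use J K in \<open>auto split: bool.splits\<close>)
    show "Int_stable (E i)" if "b \<in> UNIV" "i \<in> case_bool J K b" for i b
      using that J K stable by (auto split: bool.split_asm)
    show "disjoint_family_on (case_bool J K) UNIV"
      using disjoint by (auto simp: disjoint_family_on_def split: bool.split)
  qed
  then show ?thesis
    unfolding indep_var_def indep_vars_def2
    using X Y by (auto elim!: indep_sets_mono_sets split: bool.split)
qed

lemma (in prob_space) indep_var_subalgebra_pair:
  assumes sub: "subalgebra M N" and [measurable]: "H \<in> borel_measurable M" "Z \<in> borel_measurable M"
    and indep: "indep_sets (\<lambda>i::nat. if i = 0 then sets N else if i = 1 then rv_events M Z else rv_events M H)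
                  {0, 1, 2}"
  shows "indep_var lborel H lborel Z"
    and "Y \<in> measurable N (lborel \<Otimes>\<^sub>M lborel) \<Longrightarrow>
      indep_var (lborel \<Otimes>\<^sub>M lborel) Y (lborel \<Otimes>\<^sub>M lborel) (\<lambda>\<omega>. (H \<omega>, Z \<omega>))"
proof -
  define E where "E = (\<lambda>i::nat. if i = 0 then sets N else if i = 1 then rv_events M Z else rv_events M H)"
  have indep: "indep_sets E {0, 1, 2}"
    using indep unfolding E_def .
  have stable: "Int_stable (E i)" for i
    unfolding E_def using Int_stable_rv_events by (auto simp: Int_stable_def)
  show "indep_var lborel H lborel Z"
    by (rule indep_var_from_disjoint_blocks[OF indep stable, of "{2}" "{1}"])
       (auto simp: E_def rv_events_def intro: sigma_sets.Basic)
  let ?\<Sigma> = "sigma (space M) (E 1 \<union> E 2)"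
  have generators: "E 1 \<union> E 2 \<subseteq> Pow (space M)"
    by (auto simp: E_def rv_events_def)
  have "V \<in> borel_measurable ?\<Sigma>" if "V = H \<or> V = Z" for V
    by (rule measurableI)
       (use that generators in \<open>auto simp: E_def space_measure_of_conv sets_measure_of rv_events_def
          intro: sigma_sets.Basic\<close>)
  then have W: "(\<lambda>\<omega>. (H \<omega>, Z \<omega>)) \<in> measurable ?\<Sigma> (lborel \<Otimes>\<^sub>M lborel)"
    by (intro measurable_Pair) (auto simp: measurable_lborel2)
  assume Y: "Y \<in> measurable N (lborel \<Otimes>\<^sub>M lborel)"
  show "indep_var (lborel \<Otimes>\<^sub>M lborel) Y (lborel \<Otimes>\<^sub>M lborel) (\<lambda>\<omega>. (H \<omega>, Z \<omega>))"
  proof (rule indep_var_from_disjoint_blocks[OF indep stable, of "{0}" "{1, 2}"])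
    show "random_variable (lborel \<Otimes>\<^sub>M lborel) Y"
      by (rule measurable_from_subalg[OF sub Y])
    show "Y -` A \<inter> space M \<in> sigma_sets (space M) (\<Union>i\<in>{0}. E i)"
      if "A \<in> sets (lborel \<Otimes>\<^sub>M lborel)" for A
      using measurable_sets[OF Y that] sub by (auto simp: E_def subalgebra_def intro: sigma_sets.Basic)
    show "(\<lambda>\<omega>. (H \<omega>, Z \<omega>)) -` A \<inter> space M \<in> sigma_sets (space M) (\<Union>i\<in>{1, 2}. E i)"
      if "A \<in> sets (lborel \<Otimes>\<^sub>M lborel)" for A
      using measurable_sets[OF W that] generators by (simp add: sets_measure_of space_measure_of_conv)
  qed auto
qed

lemma (in prob_space) nn_integral_indep_var_distributed:
  assumes indep: "indep_var S Y T W" and W: "distributed M T W g"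
    and [measurable]: "G \<in> borel_measurable (S \<Otimes>\<^sub>M T)"
  shows "(\<integral>\<^sup>+\<omega>. G (Y \<omega>, W \<omega>) \<partial>M) = (\<integral>\<^sup>+\<omega>. (\<integral>\<^sup>+w. g w * G (Y \<omega>, w) \<partial>T) \<partial>M)"
proof -
  have [measurable]: "Y \<in> measurable M S" "W \<in> measurable M T"
    using indep_var_rv1[OF indep] indep_var_rv2[OF indep] by auto
  have [measurable]: "g \<in> borel_measurable T"
    using distributed_borel_measurable[OF W] .
  interpret W: prob_space "distr M T W"
    by (rule prob_space_distr) simp
  have "(\<integral>\<^sup>+\<omega>. G (Y \<omega>, W \<omega>) \<partial>M) = (\<integral>\<^sup>+p. G p \<partial>distr M (S \<Otimes>\<^sub>M T) (\<lambda>\<omega>. (Y \<omega>, W \<omega>)))"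
    by (simp add: nn_integral_distr)
  also have "\<dots> = (\<integral>\<^sup>+p. G p \<partial>(distr M S Y \<Otimes>\<^sub>M distr M T W))"
    using indep by (simp add: indep_var_distribution_eq)
  also have "\<dots> = (\<integral>\<^sup>+y. \<integral>\<^sup>+w. G (y, w) \<partial>distr M T W \<partial>distr M S Y)"
    by (rule W.nn_integral_fst[symmetric]) simp
  also have "\<dots> = (\<integral>\<^sup>+\<omega>. \<integral>\<^sup>+w. G (Y \<omega>, w) \<partial>distr M T W \<partial>M)"
    by (simp add: nn_integral_distr)
  also have "\<dots> = (\<integral>\<^sup>+\<omega>. (\<integral>\<^sup>+w. g w * G (Y \<omega>, w) \<partial>T) \<partial>M)"
    unfolding distributed_distr_eq_density[OF W]
  proof (intro nn_integral_cong nn_integral_density)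
    fix \<omega> assume "\<omega> \<in> space M"
    then have "Y \<omega> \<in> space S"
      by (rule measurable_space[rotated]) measurable
    then show "(\<lambda>w. G (Y \<omega>, w)) \<in> borel_measurable T"
      by measurable
  qed simp
  finally show ?thesis .
qed

lemma (in prob_space) emeasure_Int_laplace_normal_scale_mixture:
  fixes N :: "'a measure" and X H Z :: "'a \<Rightarrow> real" and A :: "'a set" and B :: "real set" and \<Delta> :: real
  assumes sub: "subalgebra M N" and X: "X \<in> borel_measurable N"
    and H: "distributed M lborel H (\<lambda>x. ennreal (laplace_density \<Delta> x))"
    and Z: "distributed M lborel Z (\<lambda>x. ennreal (std_normal_density x))"
    and indep: "indep_sets (\<lambda>i::nat. if i = 0 then sets N else if i = 1 then rv_events M Z else rv_events M H)
                  {0, 1, 2}"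
    and \<Delta>: "\<Delta> > 0" and A: "A \<in> sets N" and B[measurable]: "B \<in> sets borel"
  shows "emeasure M (A \<inter> {\<omega> \<in> space M. exp (X \<omega> + H \<omega>) * Z \<omega> \<in> B})
       = (\<integral>\<^sup>+\<omega>\<in>A. (\<integral>\<^sup>+x\<in>B. ennreal (eps_density \<Delta> (X \<omega>) x) \<partial>lborel) \<partial>M)"
proof -
  have HM[measurable]: "H \<in> borel_measurable M" and ZM[measurable]: "Z \<in> borel_measurable M"
    using distributed_measurable[OF H] distributed_measurable[OF Z] by simp_all
  have [measurable]: "X \<in> borel_measurable M" "A \<in> sets M"
    using measurable_from_subalg[OF sub X] sub A by (auto simp: subalgebra_def)
  txt \<open>\<open>indep_var\<close> needs both variables in the same space, so the event \<open>A\<close> travels along with \<open>X\<close>.\<close>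
  define Y where "Y \<omega> = (indicator A \<omega> :: real, X \<omega>)" for \<omega>
  define G where "G = (\<lambda>(y :: real \<times> real, u :: real, w :: real). ennreal (fst y) * indicator B (exp (snd y + u) * w))"
  have "Y \<in> measurable N (lborel \<Otimes>\<^sub>M lborel)"
    unfolding Y_def using X A by measurable
  then have indep_Y: "indep_var (lborel \<Otimes>\<^sub>M lborel) Y (lborel \<Otimes>\<^sub>M lborel) (\<lambda>\<omega>. (H \<omega>, Z \<omega>))"
    by (rule indep_var_subalgebra_pair(2)[OF sub HM ZM indep])
  have HZ: "distributed M (lborel \<Otimes>\<^sub>M lborel) (\<lambda>\<omega>. (H \<omega>, Z \<omega>))
      (\<lambda>(u, w). ennreal (laplace_density \<Delta> u) * ennreal (std_normal_density w))"
    by (intro distributed_joint_indep[OF sigma_finite_lborel sigma_finite_lborel H Z]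
        indep_var_subalgebra_pair(1)[OF sub HM ZM indep])
  have [measurable]: "G \<in> borel_measurable ((lborel \<Otimes>\<^sub>M lborel) \<Otimes>\<^sub>M (lborel \<Otimes>\<^sub>M lborel))"
    unfolding G_def by measurable
  have "emeasure M (A \<inter> {\<omega> \<in> space M. exp (X \<omega> + H \<omega>) * Z \<omega> \<in> B})
      = (\<integral>\<^sup>+\<omega>. indicator (A \<inter> {\<omega> \<in> space M. exp (X \<omega> + H \<omega>) * Z \<omega> \<in> B}) \<omega> \<partial>M)"
    by (rule nn_integral_indicator[symmetric]) measurable
  also have "\<dots> = (\<integral>\<^sup>+\<omega>. G (Y \<omega>, H \<omega>, Z \<omega>) \<partial>M)"
    by (intro nn_integral_cong) (auto simp: G_def Y_def indicator_def)
  also have "\<dots> = (\<integral>\<^sup>+\<omega>. (\<integral>\<^sup>+p. (\<lambda>(u, w). ennreal (laplace_density \<Delta> u) * ennreal (std_normal_density w)) p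
      * G (Y \<omega>, p) \<partial>(lborel \<Otimes>\<^sub>M lborel)) \<partial>M)"
    by (rule nn_integral_indep_var_distributed[OF indep_Y HZ]) simp
  also have "\<dots> = (\<integral>\<^sup>+\<omega>. (\<integral>\<^sup>+x\<in>B. ennreal (eps_density \<Delta> (X \<omega>) x) \<partial>lborel) * indicator A \<omega> \<partial>M)"
  proof (rule nn_integral_cong)
    fix \<omega>
    have "(\<integral>\<^sup>+p. (\<lambda>(u, w). ennreal (laplace_density \<Delta> u) * ennreal (std_normal_density w)) p
        * G (Y \<omega>, p) \<partial>(lborel \<Otimes>\<^sub>M lborel))
      = indicator A \<omega> * (\<integral>\<^sup>+(u, w). ennreal (laplace_density \<Delta> u) * ennreal (std_normal_density w)
          * indicator B (exp (X \<omega> + u) * w) \<partial>(lborel \<Otimes>\<^sub>M lborel))"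
      by (subst nn_integral_cmult[symmetric])
         (auto intro!: nn_integral_cong simp: G_def Y_def ennreal_indicator ac_simps split: prod.split)
    also have "\<dots> = indicator A \<omega> * (\<integral>\<^sup>+x\<in>B. ennreal (eps_density \<Delta> (X \<omega>) x) \<partial>lborel)"
      by (simp only: nn_integral_laplace_normal_scale_mixture[OF \<Delta> B])
    finally show "(\<integral>\<^sup>+p. (\<lambda>(u, w). ennreal (laplace_density \<Delta> u) * ennreal (std_normal_density w)) p
        * G (Y \<omega>, p) \<partial>(lborel \<Otimes>\<^sub>M lborel))
      = (\<integral>\<^sup>+x\<in>B. ennreal (eps_density \<Delta> (X \<omega>) x) \<partial>lborel) * indicator A \<omega>"
      by (simp only: mult.commute)
  qed
  finally show ?thesis .
qed

theorem theorem2p1: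
  fixes M :: "'a measure" and F :: "nat \<Rightarrow> 'a measure"
    and Hbar h z :: "nat \<Rightarrow> 'a \<Rightarrow> real" and \<Delta> :: real and t :: nat
  assumes "prob_space M"
    and filt_sub: "\<And>s. subalgebra M (F s)"
    and filt_mono: "\<And>s u. s \<le> u \<Longrightarrow> sets (F s) \<subseteq> sets (F u)"
    and Delta_pos: "\<Delta> > 0"
    and Hbar_meas: "\<And>s. s \<ge> 1 \<Longrightarrow> Hbar s \<in> borel_measurable (F (s - 1))"
    and Hbar_ce: "\<And>s. s \<ge> 1 \<Longrightarrow>
        AE \<omega> in M. Hbar s \<omega> = real_cond_exp M (F (s - 1)) (\<lambda>\<omega>. Hbar s \<omega> + h s \<omega>) \<omega>"
    and h_laplace: "\<And>s. distributed M lborel (h s) (\<lambda>x. ennreal (laplace_density \<Delta> x))"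
    and Delta_mean_abs: "\<And>s. prob_space.expectation M (\<lambda>\<omega>. \<bar>h s \<omega>\<bar>) = \<Delta>"
    and h_indep: "prob_space.indep_vars M (\<lambda>_. borel) h UNIV"
    and z_normal: "\<And>s. distributed M lborel (z s) (\<lambda>x. ennreal (std_normal_density x))"
    and z_indep: "prob_space.indep_vars M (\<lambda>_. borel) z UNIV"
    and zh_F_indep: "\<And>s. s \<ge> 1 \<Longrightarrow>
        prob_space.indep_sets M
          (\<lambda>i::nat. if i = 0 then sets (F (s - 1))
                    else if i = 1 then rv_events M (z s) else rv_events M (h s)) {0, 1, 2}"
    and t_pos: "t \<ge> 1"
  shows "\<forall>A\<in>sets (F (t - 1)). \<forall>B\<in>sets borel.
           emeasure M (A \<inter> {\<omega> \<in> space M. exp (Hbar t \<omega> + h t \<omega>) * z t \<omega> \<in> B})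
           = (\<integral>\<^sup>+\<omega>\<in>A. (\<integral>\<^sup>+x\<in>B. ennreal (eps_density \<Delta> (Hbar t \<omega>) x) \<partial>lborel) \<partial>M)"
proof (intro ballI)
  interpret prob_space M by fact
  fix A B assume "A \<in> sets (F (t - 1))" and "B \<in> sets (borel :: real measure)"
  then show "emeasure M (A \<inter> {\<omega> \<in> space M. exp (Hbar t \<omega> + h t \<omega>) * z t \<omega> \<in> B})
      = (\<integral>\<^sup>+\<omega>\<in>A. (\<integral>\<^sup>+x\<in>B. ennreal (eps_density \<Delta> (Hbar t \<omega>) x) \<partial>lborel) \<partial>M)"
    by (intro emeasure_Int_laplace_normal_scale_mixture[OF filt_sub Hbar_meas[OF t_pos] h_laplace z_normal
        zh_F_indep[OF t_pos] Delta_pos])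
qed

end
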